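(* Let $G$ be a graph, $m\geq 2$, and $\mathcal{H}=(L,H)$ an $m$-fold cover of $G$. Let $e=uv\in E(G)$ and $H'=H-E_H(L(u),L(v))$, so that $\mathcal{H}'=(L,H')$ is an $m$-fold cover of $G-\{e\}$. If there is a natural bijection between the $\mathcal{H}'$-colorings of $G-\{e\}$ and the proper $m$-colorings of $G-\{e\}$, then $$P_{DP}(G,\mathcal{H})\geq P(G-\{e\},m)-\max\left\{P(G-\{e\},m)-P(G,m),\ \frac{P(G,m)}{m-1}\right\}.$$ Moreover, there exists an $m$-fold cover $\mathcal{H}^*=(L,H^* )$ of $G$ with $$P_{DP}(G,\mathcal{H}^* )=P(G-\{e\},m)-\max\left\{P(G-\{e\},m)-P(G,m),\ \frac{P(G,m)}{m-1}\right\}.$$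
   Context: All graphs are finite and simple; $G-\{e\}$ is $G$ with edge $e$ deleted. $P(G,m)$ denotes the chromatic polynomial of $G$. A cover of a graph $G$ is a pair $\mathcal{H}=(L,H)$ where $H$ is a graph and $L:V(G)\to\mathcal{P}(V(H))$ satisfies: (1) the sets $L(u)$, $u\in V(G)$, partition $V(H)$; (2) for every $u$, $H[L(u)]$ is complete; (3) if $E_H(L(u),L(v))\neq\emptyset$ then $u=v$ or $uv\in E(G)$; (4) if $uv\in E(G)$ then $E_H(L(u),L(v))$ is a matching (possibly empty). Here $E_H(S,U)$ is the set of edges of $H$ between $S$ and $U$. The cover is $m$-fold if $|L(u)|=m$ for all $u$. An $\mathcal{H}$-coloring is an independent set of $H$ of size $|V(G)|$; $P_{DP}(G,\mathcal{H})$ is the number of $\mathcal{H}$-colorings. For an $m$-fold cover $\mathcal{H}=(L,H)$ of $G$, we say there is a natural bijection between the $\mathcal{H}$-colorings of $G$ and the proper $m$-colorings of $G$ if the elements of each $L(v)$ can be labeled $L(v)=\{(v,j):j\in[m]\}$ so that whenever $uv\in E(G)$, $(u,j)$ and $(v,j)$ are adjacent in $H$ for every $j\in[m]$. *)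

theory Defs
  imports Complex_Main "HOL-Library.FuncSet"
begin

definition simple_graph :: "'a set \<Rightarrow> 'a set set \<Rightarrow> bool" where
  "simple_graph V E \<longleftrightarrow> finite V \<and>
     E \<subseteq> {e. \<exists>x y. e = {x, y} \<and> x \<noteq> y \<and> x \<in> V \<and> y \<in> V}"

definition edges_between :: "'a set set \<Rightarrow> 'a set \<Rightarrow> 'a set \<Rightarrow> 'a set set" where
  "edges_between EH S U = {f \<in> EH. \<exists>a\<in>S. \<exists>b\<in>U. f = {a, b}}"

definition is_matching :: "'a set set \<Rightarrow> bool" where
  "is_matching M \<longleftrightarrow> (\<forall>f\<in>M. \<forall>g\<in>M. f \<noteq> g \<longrightarrow> f \<inter> g = {})"

definition is_cover :: "'v set \<Rightarrow> 'v set set \<Rightarrow> ('v \<Rightarrow> 'c set) \<Rightarrow> 'c set \<Rightarrow> 'c set set \<Rightarrow> bool" where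
  "is_cover V E L VH EH \<longleftrightarrow>
     simple_graph VH EH \<and>
     (\<Union>u\<in>V. L u) = VH \<and>
     (\<forall>u\<in>V. \<forall>w\<in>V. u \<noteq> w \<longrightarrow> L u \<inter> L w = {}) \<and>
     (\<forall>u\<in>V. \<forall>a\<in>L u. \<forall>b\<in>L u. a \<noteq> b \<longrightarrow> {a, b} \<in> EH) \<and>
     (\<forall>u\<in>V. \<forall>w\<in>V. edges_between EH (L u) (L w) \<noteq> {} \<longrightarrow> u = w \<or> {u, w} \<in> E) \<and>
     (\<forall>u\<in>V. \<forall>w\<in>V. {u, w} \<in> E \<longrightarrow> is_matching (edges_between EH (L u) (L w)))"

definition is_m_fold_cover :: "'v set \<Rightarrow> 'v set set \<Rightarrow> ('v \<Rightarrow> 'c set) \<Rightarrow> 'c set \<Rightarrow> 'c set set \<Rightarrow> nat \<Rightarrow> bool" where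
  "is_m_fold_cover V E L VH EH m \<longleftrightarrow> is_cover V E L VH EH \<and> (\<forall>u\<in>V. card (L u) = m)"

text \<open>Number of H-colorings: independent sets of H of size |V(G)|.\<close>
definition P_DP :: "'v set \<Rightarrow> 'c set \<Rightarrow> 'c set set \<Rightarrow> nat" where
  "P_DP V VH EH = card {I. I \<subseteq> VH \<and> (\<forall>a\<in>I. \<forall>b\<in>I. {a, b} \<notin> EH) \<and> card I = card V}"

definition chrom :: "'v set \<Rightarrow> 'v set set \<Rightarrow> nat \<Rightarrow> nat" where
  "chrom V E m = card {f \<in> V \<rightarrow>\<^sub>E {..<m}. \<forall>x\<in>V. \<forall>y\<in>V. {x, y} \<in> E \<longrightarrow> f x \<noteq> f y}"

text \<open>Natural bijection: L(v) can be labeled (v,j), j in [m] (here j < m), with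
  (u,j),(v,j) adjacent in H for every edge uv of G.\<close>
definition natural_bijection :: "'v set \<Rightarrow> 'v set set \<Rightarrow> ('v \<Rightarrow> 'c set) \<Rightarrow> 'c set set \<Rightarrow> nat \<Rightarrow> bool" where
  "natural_bijection V E L EH m \<longleftrightarrow>
     (\<exists>lab :: 'v \<Rightarrow> nat \<Rightarrow> 'c.
        (\<forall>v\<in>V. bij_betw (lab v) {..<m} (L v)) \<and>
        (\<forall>u\<in>V. \<forall>v\<in>V. {u, v} \<in> E \<longrightarrow> (\<forall>j<m. {lab u j, lab v j} \<in> EH)))"

end

theory Submission
  imports Defs "HOL-Combinatorics.Transposition"
begin

text \<open>Let N(i, j) be the number of proper m-colourings of G - e with u coloured i
  and w coloured j. Permuting colours shows that N(i, i) = a and N(i, j) = b for i \<noteq> j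
  do not depend on i, j, so P(G - e, m) - P(G, m) = m a and P(G, m) / (m - 1) = m b.
  Since the labelling makes every edge of H' straight, the H-colourings are the
  lifts {(v, c v)} of the proper colourings c of G - e for which (u, c u)(w, c w) is not an
  edge of H. These cross edges form a matching, hence at most m pairs (i, j), each
  removing N(i, j) \<le> max a b colourings. Putting back the identity matching (if a \<ge> b) or
  a cyclic shift (if a < b) removes exactly m max a b.\<close>

lemma edges_between_commute: "edges_between X A B = edges_between X B A"
  unfolding edges_between_def by (auto simp: insert_commute)

lemma is_matching_subset: "is_matching M \<Longrightarrow> N \<subseteq> M \<Longrightarrow> is_matching N"
  unfolding is_matching_def by blast

lemma is_matching_eqI: "is_matching M \<Longrightarrow> f \<in> M \<Longrightarrow> g \<in> M \<Longrightarrow> f \<inter> g \<noteq> {} \<Longrightarrow> f = g"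
  unfolding is_matching_def by blast

section \<open>Colourings with prescribed colours at two vertices\<close>

definition proper_colorings :: "'v set \<Rightarrow> 'v set set \<Rightarrow> nat \<Rightarrow> ('v \<Rightarrow> nat) set" where
  "proper_colorings V E m = {f \<in> V \<rightarrow>\<^sub>E {..<m}. \<forall>x\<in>V. \<forall>y\<in>V. {x, y} \<in> E \<longrightarrow> f x \<noteq> f y}"

lemma chrom_eq_card_proper_colorings: "chrom V E m = card (proper_colorings V E m)"
  unfolding chrom_def proper_colorings_def ..

lemma finite_proper_colorings: "finite V \<Longrightarrow> finite (proper_colorings V E m)"
  unfolding proper_colorings_def by (rule finite_subset[of _ "V \<rightarrow>\<^sub>E {..<m}"]) (auto intro!: finite_PiE)

lemma proper_colorings_add_edge:
  assumes "u \<in> V" "w \<in> V" "{u, w} \<in> E"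
  shows "proper_colorings V E m = {c \<in> proper_colorings V (E - {{u, w}}) m. c u \<noteq> c w}"
proof -
  have "(\<forall>x\<in>V. \<forall>y\<in>V. {x, y} \<in> E \<longrightarrow> c x \<noteq> c y) \<longleftrightarrow>
      (\<forall>x\<in>V. \<forall>y\<in>V. {x, y} \<in> E - {{u, w}} \<longrightarrow> c x \<noteq> c y) \<and> c u \<noteq> c w"
    for c :: "_ \<Rightarrow> nat"
    using assms by (auto simp: doubleton_eq_iff) metis
  then show ?thesis
    unfolding proper_colorings_def by auto
qed

definition pinned_colorings :: "'v set \<Rightarrow> 'v set set \<Rightarrow> nat \<Rightarrow> 'v \<Rightarrow> 'v \<Rightarrow> nat \<Rightarrow> nat \<Rightarrow> ('v \<Rightarrow> nat) set" where
  "pinned_colorings V E m u w i j = {c \<in> proper_colorings V E m. c u = i \<and> c w = j}"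

lemma card_pinned_colorings_le_permute:
  assumes "finite V" "u \<in> V" "w \<in> V" "inj_on \<pi> {..<m}" "\<pi> ` {..<m} \<subseteq> {..<m}"
  shows "card (pinned_colorings V E m u w i j) \<le> card (pinned_colorings V E m u w (\<pi> i) (\<pi> j))"
proof (rule card_inj_on_le)
  let ?f = "\<lambda>c. restrict (\<pi> \<circ> c) V"
  show "inj_on ?f (pinned_colorings V E m u w i j)"
  proof (rule inj_onI)
    fix c d assume c: "c \<in> pinned_colorings V E m u w i j" and d: "d \<in> pinned_colorings V E m u w i j"
      and eq: "?f c = ?f d"
    show "c = d"
    proof (rule PiE_ext)
      show "c \<in> V \<rightarrow>\<^sub>E {..<m}" "d \<in> V \<rightarrow>\<^sub>E {..<m}"
        using c d unfolding pinned_colorings_def proper_colorings_def by auto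
      fix v assume "v \<in> V"
      then show "c v = d v"
        using fun_cong[OF eq, of v] \<open>c \<in> V \<rightarrow>\<^sub>E {..<m}\<close> \<open>d \<in> V \<rightarrow>\<^sub>E {..<m}\<close> assms(4)
        by (auto dest: inj_onD)
    qed
  qed
  show "?f ` pinned_colorings V E m u w i j \<subseteq> pinned_colorings V E m u w (\<pi> i) (\<pi> j)"
  proof clarify
    fix c assume c: "c \<in> pinned_colorings V E m u w i j"
    then have "c \<in> V \<rightarrow>\<^sub>E {..<m}" and "\<forall>x\<in>V. \<forall>y\<in>V. {x, y} \<in> E \<longrightarrow> c x \<noteq> c y"
      unfolding pinned_colorings_def proper_colorings_def by auto
    then have "\<forall>x\<in>V. \<forall>y\<in>V. {x, y} \<in> E \<longrightarrow> \<pi> (c x) \<noteq> \<pi> (c y)"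
      using assms(4) by (auto dest: inj_onD)
    then show "?f c \<in> pinned_colorings V E m u w (\<pi> i) (\<pi> j)"
      using c \<open>c \<in> V \<rightarrow>\<^sub>E {..<m}\<close> assms(2,3,5)
      unfolding pinned_colorings_def proper_colorings_def by (auto simp: image_subset_iff)
  qed
  show "finite (pinned_colorings V E m u w (\<pi> i) (\<pi> j))"
    unfolding pinned_colorings_def using finite_proper_colorings[OF assms(1)] by simp
qed

lemma card_pinned_colorings_transpose:
  assumes "finite V" "u \<in> V" "w \<in> V" "a < m" "b < m"
  shows "card (pinned_colorings V E m u w (transpose a b i) (transpose a b j)) =
    card (pinned_colorings V E m u w i j)"
proof -
  have perm: "inj_on (transpose a b) {..<m}" "transpose a b ` {..<m} \<subseteq> {..<m}"
    using assms(4,5) by (auto simp: transpose_def)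
  show ?thesis
    using card_pinned_colorings_le_permute[OF assms(1-3) perm, of E i j]
      card_pinned_colorings_le_permute[OF assms(1-3) perm, of E "transpose a b i" "transpose a b j"]
    by simp
qed

lemma card_pinned_colorings_diag:
  assumes "finite V" "u \<in> V" "w \<in> V" "i < m" "k < m"
  shows "card (pinned_colorings V E m u w i i) = card (pinned_colorings V E m u w k k)"
  using card_pinned_colorings_transpose[OF assms, of E i i] by simp

lemma card_pinned_colorings_off_diag:
  assumes "finite V" "u \<in> V" "w \<in> V" "i < m" "j < m" "i \<noteq> j" "k < m" "l < m" "k \<noteq> l"
  shows "card (pinned_colorings V E m u w i j) = card (pinned_colorings V E m u w k l)"
proof -
  define j' where "j' = transpose i k j"
  have "j' < m" "j' \<noteq> k"
    using assms(4-7) unfolding j'_def transpose_def by auto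
  have "card (pinned_colorings V E m u w i j) = card (pinned_colorings V E m u w k j')"
    using card_pinned_colorings_transpose[OF assms(1-4,7), of E i j] unfolding j'_def by simp
  also have "\<dots> = card (pinned_colorings V E m u w k l)"
    using card_pinned_colorings_transpose[OF assms(1-3) \<open>j' < m\<close> assms(8), of E k j']
      \<open>j' \<noteq> k\<close> assms(9) by simp
  finally show ?thesis .
qed

lemma card_proper_colorings_pinned_in:
  assumes "finite V" "finite S"
  shows "card {c \<in> proper_colorings V E m. (c u, c w) \<in> S} =
    (\<Sum>(i, j)\<in>S. card (pinned_colorings V E m u w i j))"
proof -
  let ?P = "\<lambda>p. pinned_colorings V E m u w (fst p) (snd p)"
  have "{c \<in> proper_colorings V E m. (c u, c w) \<in> S} = (\<Union>p\<in>S. ?P p)"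
    unfolding pinned_colorings_def by auto
  moreover have "card (\<Union>p\<in>S. ?P p) = (\<Sum>p\<in>S. card (?P p))"
  proof (rule card_UN_disjoint[OF assms(2)])
    show "\<forall>p\<in>S. finite (?P p)"
      using finite_proper_colorings[OF assms(1)] unfolding pinned_colorings_def by simp
    show "\<forall>p\<in>S. \<forall>q\<in>S. p \<noteq> q \<longrightarrow> ?P p \<inter> ?P q = {}"
      unfolding pinned_colorings_def by (auto simp: prod_eq_iff)
  qed
  ultimately show ?thesis
    by (simp add: case_prod_beta)
qed

lemma sum_card_pinned_colorings_diag:
  assumes "finite V" "u \<in> V" "w \<in> V"
  shows "(\<Sum>i<m. card (pinned_colorings V E m u w i i)) = m * card (pinned_colorings V E m u w 0 0)"
proof -
  have "(\<Sum>i<m. card (pinned_colorings V E m u w i i)) = (\<Sum>i<m. card (pinned_colorings V E m u w 0 0))"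
  proof (rule sum.cong[OF refl])
    fix i assume "i \<in> {..<m}"
    then show "card (pinned_colorings V E m u w i i) = card (pinned_colorings V E m u w 0 0)"
      using card_pinned_colorings_diag[OF assms, of i m 0 E] by simp
  qed
  then show ?thesis
    by simp
qed

lemma sum_card_pinned_colorings_derangement:
  assumes "finite V" "u \<in> V" "w \<in> V" and \<sigma>: "\<And>i. i < m \<Longrightarrow> \<sigma> i < m \<and> \<sigma> i \<noteq> i"
  shows "(\<Sum>i<m. card (pinned_colorings V E m u w i (\<sigma> i))) = m * card (pinned_colorings V E m u w 0 1)"
proof -
  have "(\<Sum>i<m. card (pinned_colorings V E m u w i (\<sigma> i))) = (\<Sum>i<m. card (pinned_colorings V E m u w 0 1))"
  proof (rule sum.cong[OF refl])
    fix i assume "i \<in> {..<m}"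
    then have "i < m" "\<sigma> i < m" "i \<noteq> \<sigma> i" "1 < m"
      using \<sigma>[of i] by auto
    then show "card (pinned_colorings V E m u w i (\<sigma> i)) = card (pinned_colorings V E m u w 0 1)"
      using card_pinned_colorings_off_diag[OF assms(1-3), of i m "\<sigma> i" 0 1 E] by simp
  qed
  then show ?thesis
    by simp
qed

lemma card_proper_colorings_same_color:
  assumes "finite V" "u \<in> V" "w \<in> V"
  shows "card {c \<in> proper_colorings V E m. c u = c w} = m * card (pinned_colorings V E m u w 0 0)"
proof -
  have "{c \<in> proper_colorings V E m. c u = c w} =
      {c \<in> proper_colorings V E m. (c u, c w) \<in> (\<lambda>i. (i, i)) ` {..<m}}"
    using assms(2) unfolding proper_colorings_def by auto
  also have "card \<dots> = (\<Sum>i<m. card (pinned_colorings V E m u w i i))"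
    by (simp add: card_proper_colorings_pinned_in assms(1) sum.reindex inj_on_def)
  finally show ?thesis
    using sum_card_pinned_colorings_diag[OF assms] by simp
qed

lemma card_proper_colorings_distinct_colors:
  assumes "finite V" "u \<in> V" "w \<in> V"
  shows "card {c \<in> proper_colorings V E m. c u \<noteq> c w} =
    m * (m - 1) * card (pinned_colorings V E m u w 0 1)"
proof -
  define Off where "Off = {..<m} \<times> {..<m} - (\<lambda>i. (i, i)) ` {..<m}"
  have "card ((\<lambda>i. (i, i)) ` {..<m}) = m"
    by (simp add: card_image inj_on_def)
  then have "card Off = m * (m - 1)"
    unfolding Off_def by (subst card_Diff_subset) (auto simp: diff_mult_distrib2)
  have "{c \<in> proper_colorings V E m. c u \<noteq> c w} = {c \<in> proper_colorings V E m. (c u, c w) \<in> Off}"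
    using assms(2,3) unfolding proper_colorings_def Off_def by auto
  also have "card \<dots> = (\<Sum>(i, j)\<in>Off. card (pinned_colorings V E m u w i j))"
    by (rule card_proper_colorings_pinned_in[OF assms(1)]) (simp add: Off_def)
  also have "\<dots> = (\<Sum>(i, j)\<in>Off. card (pinned_colorings V E m u w 0 1))"
  proof (rule sum.cong[OF refl], clarify)
    fix i j assume "(i, j) \<in> Off"
    then have "i < m" "j < m" "i \<noteq> j" "1 < m"
      unfolding Off_def by auto
    then show "card (pinned_colorings V E m u w i j) = card (pinned_colorings V E m u w 0 1)"
      using card_pinned_colorings_off_diag[OF assms, of i m j 0 1 E] by simp
  qed
  finally show ?thesis
    using \<open>card Off = m * (m - 1)\<close> by simp
qed

section \<open>Naturally labelled covers\<close>

definition independent_set :: "'c set set \<Rightarrow> 'c set \<Rightarrow> bool" where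
  "independent_set X I \<longleftrightarrow> (\<forall>a\<in>I. \<forall>b\<in>I. {a, b} \<notin> X)"

lemma independent_set_antimono: "independent_set Y I \<Longrightarrow> X \<subseteq> Y \<Longrightarrow> independent_set X I"
  unfolding independent_set_def by blast

lemma P_DP_eq_card_independent_sets:
  "P_DP V VH X = card {I. I \<subseteq> VH \<and> independent_set X I \<and> card I = card V}"
  unfolding P_DP_def independent_set_def ..

text \<open>lab v j is the vertex (v, j) of the natural labelling L(v) = {(v, j) : j < m}.\<close>
locale naturally_labelled_cover =
  fixes V :: "'v set" and E :: "'v set set" and m :: nat
    and L :: "'v \<Rightarrow> 'c set" and VH :: "'c set" and EH :: "'c set set" and u w :: 'v
    and lab :: "'v \<Rightarrow> nat \<Rightarrow> 'c"
  assumes graph: "simple_graph V E"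
    and cover: "is_m_fold_cover V E L VH EH m"
    and edge_uw: "{u, w} \<in> E"
    and lab_bij: "\<And>v. v \<in> V \<Longrightarrow> bij_betw (lab v) {..<m} (L v)"
    and lab_straight: "\<And>x y j. x \<in> V \<Longrightarrow> y \<in> V \<Longrightarrow> {x, y} \<in> E - {{u, w}} \<Longrightarrow> j < m \<Longrightarrow>
      {lab x j, lab y j} \<in> EH - edges_between EH (L u) (L w)"
begin

abbreviation EH' :: "'c set set" where
  "EH' \<equiv> EH - edges_between EH (L u) (L w)"

abbreviation pinned :: "nat \<Rightarrow> nat \<Rightarrow> ('v \<Rightarrow> nat) set" where
  "pinned \<equiv> pinned_colorings V (E - {{u, w}}) m u w"

lemma finite_V: "finite V"
  using graph unfolding simple_graph_def by simp

lemma edge_ends: "{x, y} \<in> E \<Longrightarrow> x \<in> V \<and> y \<in> V \<and> x \<noteq> y"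
  using graph unfolding simple_graph_def by (auto simp: doubleton_eq_iff)

lemma u_in_V: "u \<in> V" and w_in_V: "w \<in> V" and u_neq_w: "u \<noteq> w"
  using edge_ends[OF edge_uw] by simp_all

lemma cover_conditions:
  "simple_graph VH EH" "(\<Union>v\<in>V. L v) = VH" "\<forall>x\<in>V. \<forall>y\<in>V. x \<noteq> y \<longrightarrow> L x \<inter> L y = {}"
  "\<forall>v\<in>V. \<forall>a\<in>L v. \<forall>b\<in>L v. a \<noteq> b \<longrightarrow> {a, b} \<in> EH"
  "\<forall>x\<in>V. \<forall>y\<in>V. edges_between EH (L x) (L y) \<noteq> {} \<longrightarrow> x = y \<or> {x, y} \<in> E"
  "\<forall>x\<in>V. \<forall>y\<in>V. {x, y} \<in> E \<longrightarrow> is_matching (edges_between EH (L x) (L y))"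
  "\<forall>v\<in>V. card (L v) = m"
  using cover unfolding is_m_fold_cover_def is_cover_def by simp_all

lemma finite_VH: "finite VH"
  using cover_conditions(1) unfolding simple_graph_def by simp

lemma cover_edge_ends: "f \<in> EH \<Longrightarrow> \<exists>a b. f = {a, b} \<and> a \<noteq> b \<and> a \<in> VH \<and> b \<in> VH"
  using cover_conditions(1) unfolding simple_graph_def by blast

lemma L_subset: "v \<in> V \<Longrightarrow> L v \<subseteq> VH"
  using cover_conditions(2) by blast

lemma in_some_L: "a \<in> VH \<Longrightarrow> \<exists>v\<in>V. a \<in> L v"
  using cover_conditions(2) by blast

lemma L_disjoint: "x \<in> V \<Longrightarrow> y \<in> V \<Longrightarrow> a \<in> L x \<Longrightarrow> a \<in> L y \<Longrightarrow> x = y"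
  using cover_conditions(3) by blast

lemma L_clique: "v \<in> V \<Longrightarrow> a \<in> L v \<Longrightarrow> b \<in> L v \<Longrightarrow> a \<noteq> b \<Longrightarrow> {a, b} \<in> EH"
  using cover_conditions(4) by blast

lemma edges_between_nonempty:
  "x \<in> V \<Longrightarrow> y \<in> V \<Longrightarrow> edges_between EH (L x) (L y) \<noteq> {} \<Longrightarrow> x = y \<or> {x, y} \<in> E"
  using cover_conditions(5) by blast

lemma edges_between_matching:
  "x \<in> V \<Longrightarrow> y \<in> V \<Longrightarrow> {x, y} \<in> E \<Longrightarrow> is_matching (edges_between EH (L x) (L y))"
  using cover_conditions(6) by blast

lemma singleton_notin_EH: "{a} \<notin> EH"
proof
  assume "{a} \<in> EH"
  then obtain b c where "{a} = {b, c}" "b \<noteq> c"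
    using cover_edge_ends by blast
  then show False
    by (metis insert_iff singletonD)
qed

lemma lab_in_L: "v \<in> V \<Longrightarrow> i < m \<Longrightarrow> lab v i \<in> L v"
  using lab_bij unfolding bij_betw_def by auto

lemma lab_eq_iff: "v \<in> V \<Longrightarrow> i < m \<Longrightarrow> j < m \<Longrightarrow> lab v i = lab v j \<longleftrightarrow> i = j"
  using lab_bij unfolding bij_betw_def inj_on_def by auto

lemma L_eq_lab_image: "v \<in> V \<Longrightarrow> L v = lab v ` {..<m}"
  using lab_bij unfolding bij_betw_def by auto

lemma lab_eq_lab_iff:
  "x \<in> V \<Longrightarrow> y \<in> V \<Longrightarrow> i < m \<Longrightarrow> j < m \<Longrightarrow> lab x i = lab y j \<longleftrightarrow> x = y \<and> i = j"
  using L_disjoint[of x y "lab x i"] lab_in_L[of x i] lab_in_L[of y j] lab_eq_iff[of x i j] by auto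

lemma L_clique_EH':
  assumes "v \<in> V" "a \<in> L v" "b \<in> L v" "a \<noteq> b"
  shows "{a, b} \<in> EH'"
proof -
  have "{a, b} \<notin> edges_between EH (L u) (L w)"
  proof
    assume "{a, b} \<in> edges_between EH (L u) (L w)"
    then obtain a' b' where "a' \<in> L u" "b' \<in> L w" "{a, b} = {a', b'}"
      unfolding edges_between_def by blast
    then have "a' \<in> L v" "b' \<in> L v"
      using assms(2,3) by auto
    then show False
      using L_disjoint[OF u_in_V assms(1)] L_disjoint[OF w_in_V assms(1)] u_neq_w
        \<open>a' \<in> L u\<close> \<open>b' \<in> L w\<close> by blast
  qed
  then show ?thesis
    using L_clique[OF assms] by blast
qed

lemma lab_pair_eq_cross_iff:
  assumes "x \<in> V" "y \<in> V" "i' < m" "j' < m" "i < m" "j < m"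
  shows "{lab x i', lab y j'} = {lab u i, lab w j} \<longleftrightarrow>
    (x = u \<and> y = w \<and> i' = i \<and> j' = j) \<or> (x = w \<and> y = u \<and> i' = j \<and> j' = i)"
  using assms u_in_V w_in_V by (simp add: doubleton_eq_iff lab_eq_lab_iff) blast

lemma lab_pair_in_edges_between:
  "x \<in> V \<Longrightarrow> y \<in> V \<Longrightarrow> i < m \<Longrightarrow> j < m \<Longrightarrow> {lab x i, lab y j} \<in> X \<Longrightarrow>
    {lab x i, lab y j} \<in> edges_between X (L x) (L y)"
  unfolding edges_between_def using lab_in_L by blast

text \<open>The matching across xy already contains all m straight edges (x, j)(y, j),
  so it contains no others.\<close>
lemma EH'_edge_cases:
  assumes x: "x \<in> V" and y: "y \<in> V" and "i < m" "j < m" and e: "{lab x i, lab y j} \<in> EH'"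
  shows "(x = y \<and> i \<noteq> j) \<or> ({x, y} \<in> E - {{u, w}} \<and> i = j)"
proof (cases "x = y")
  case True
  then show ?thesis
    using e singleton_notin_EH by (cases "i = j") auto
next
  case False
  have in_EH: "{lab x i, lab y j} \<in> EH" and "{lab x i, lab y j} \<notin> edges_between EH (L u) (L w)"
    using e by auto
  moreover have "{lab x i, lab y j} \<in> edges_between EH (L x) (L y)"
    using lab_pair_in_edges_between[OF x y \<open>i < m\<close> \<open>j < m\<close> in_EH] .
  ultimately have "{x, y} \<in> E"
    using edges_between_nonempty[OF x y] False by blast
  moreover have "{x, y} \<noteq> {u, w}"
  proof
    assume "{x, y} = {u, w}"
    then have "edges_between EH (L x) (L y) = edges_between EH (L u) (L w)"
      using edges_between_commute by (metis doubleton_eq_iff)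
    then show False
      using \<open>{lab x i, lab y j} \<in> edges_between EH (L x) (L y)\<close> e by blast
  qed
  ultimately have xy: "{x, y} \<in> E - {{u, w}}"
    by blast
  have "{lab x j, lab y j} \<in> edges_between EH (L x) (L y)"
    using lab_pair_in_edges_between[OF x y \<open>j < m\<close> \<open>j < m\<close>] lab_straight[OF x y xy \<open>j < m\<close>]
    by blast
  moreover have "{lab x i, lab y j} \<inter> {lab x j, lab y j} \<noteq> {}"
    by simp
  ultimately have "{lab x i, lab y j} = {lab x j, lab y j}"
    using is_matching_eqI edges_between_matching[OF x y] xy
      \<open>{lab x i, lab y j} \<in> edges_between EH (L x) (L y)\<close> by blast
  moreover have "lab x i \<noteq> lab y j"
    using lab_eq_lab_iff[OF x y \<open>i < m\<close> \<open>j < m\<close>] False by simp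
  ultimately have "lab x i = lab x j"
    by (metis doubleton_eq_iff)
  then have "i = j"
    using lab_eq_iff[OF x \<open>i < m\<close> \<open>j < m\<close>] by simp
  then show ?thesis
    using xy by blast
qed

section \<open>H-colourings of covers differing only between L u and L w\<close>

definition cross_edges :: "(nat \<times> nat) set \<Rightarrow> 'c set set" where
  "cross_edges S = {{lab u i, lab w j} | i j. (i, j) \<in> S}"

text \<open>Every cover of G agreeing with H' away from L u \<times> L w has this form;
  H itself is cover_with cross_pairs.\<close>
definition cover_with :: "(nat \<times> nat) set \<Rightarrow> 'c set set" where
  "cover_with S = EH' \<union> cross_edges S"

definition lift :: "('v \<Rightarrow> nat) \<Rightarrow> 'c set" where
  "lift c = (\<lambda>v. lab v (c v)) ` V"

lemma lab_color_eq_iff: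
  "c \<in> V \<rightarrow>\<^sub>E {..<m} \<Longrightarrow> d \<in> V \<rightarrow>\<^sub>E {..<m} \<Longrightarrow> x \<in> V \<Longrightarrow> y \<in> V \<Longrightarrow>
    lab x (c x) = lab y (d y) \<longleftrightarrow> x = y \<and> c x = d y"
  using lab_eq_lab_iff PiE_mem by (metis lessThan_iff)

lemma lift_subset_VH: "c \<in> V \<rightarrow>\<^sub>E {..<m} \<Longrightarrow> lift c \<subseteq> VH"
  unfolding lift_def using L_subset lab_in_L by fastforce

lemma card_lift: "c \<in> V \<rightarrow>\<^sub>E {..<m} \<Longrightarrow> card (lift c) = card V"
  unfolding lift_def by (rule card_image) (auto intro!: inj_onI simp: lab_color_eq_iff)

lemma inj_on_lift: "inj_on lift (V \<rightarrow>\<^sub>E {..<m})"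
proof (rule inj_onI)
  fix c d assume c: "c \<in> V \<rightarrow>\<^sub>E {..<m}" and d: "d \<in> V \<rightarrow>\<^sub>E {..<m}" and "lift c = lift d"
  show "c = d"
  proof (rule PiE_ext[OF c d])
    fix v assume "v \<in> V"
    then have "lab v (c v) \<in> lift d"
      using \<open>lift c = lift d\<close> unfolding lift_def by blast
    then show "c v = d v"
      using \<open>v \<in> V\<close> c d unfolding lift_def by (auto simp: lab_color_eq_iff)
  qed
qed

lemma lab_pair_in_cross_edges_iff:
  assumes "S \<subseteq> {..<m} \<times> {..<m}" "x \<in> V" "y \<in> V" "i < m" "j < m"
  shows "{lab x i, lab y j} \<in> cross_edges S \<longleftrightarrow>
    (x = u \<and> y = w \<and> (i, j) \<in> S) \<or> (x = w \<and> y = u \<and> (j, i) \<in> S)"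
proof -
  have "{lab x i, lab y j} = {lab u k, lab w l} \<longleftrightarrow>
      (x = u \<and> y = w \<and> i = k \<and> j = l) \<or> (x = w \<and> y = u \<and> i = l \<and> j = k)"
    if "(k, l) \<in> S" for k l
    using lab_pair_eq_cross_iff[OF assms(2-5)] that assms(1) by blast
  then show ?thesis
    unfolding cross_edges_def by blast
qed

lemma lab_pair_in_EH'_iff:
  assumes "x \<in> V" "y \<in> V" "i < m" "j < m"
  shows "{lab x i, lab y j} \<in> EH' \<longleftrightarrow> (x = y \<and> i \<noteq> j) \<or> ({x, y} \<in> E - {{u, w}} \<and> i = j)"
  using EH'_edge_cases[OF assms] L_clique_EH'[OF assms(1) lab_in_L lab_in_L] lab_straight[OF assms(1,2)]
    assms lab_eq_iff by auto

lemma lift_avoids_cross_edges_iff: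
  assumes S: "S \<subseteq> {..<m} \<times> {..<m}" and c: "c \<in> V \<rightarrow>\<^sub>E {..<m}"
  shows "(\<forall>x\<in>V. \<forall>y\<in>V. {lab x (c x), lab y (c y)} \<notin> cross_edges S) \<longleftrightarrow> (c u, c w) \<notin> S"
proof
  assume "\<forall>x\<in>V. \<forall>y\<in>V. {lab x (c x), lab y (c y)} \<notin> cross_edges S"
  moreover have "c u < m" "c w < m"
    using c u_in_V w_in_V by auto
  ultimately show "(c u, c w) \<notin> S"
    using lab_pair_in_cross_edges_iff[OF S u_in_V w_in_V] u_in_V w_in_V by blast
next
  assume "(c u, c w) \<notin> S"
  show "\<forall>x\<in>V. \<forall>y\<in>V. {lab x (c x), lab y (c y)} \<notin> cross_edges S"
  proof (intro ballI)
    fix x y assume xy: "x \<in> V" "y \<in> V"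
    then have "c x < m" "c y < m"
      using c by auto
    then show "{lab x (c x), lab y (c y)} \<notin> cross_edges S"
      using lab_pair_in_cross_edges_iff[OF S xy] \<open>(c u, c w) \<notin> S\<close> by auto
  qed
qed

lemma independent_lift_iff:
  assumes S: "S \<subseteq> {..<m} \<times> {..<m}" and c: "c \<in> V \<rightarrow>\<^sub>E {..<m}"
  shows "independent_set (cover_with S) (lift c) \<longleftrightarrow>
    c \<in> proper_colorings V (E - {{u, w}}) m \<and> (c u, c w) \<notin> S"
proof -
  have "independent_set (cover_with S) (lift c) \<longleftrightarrow>
      (\<forall>x\<in>V. \<forall>y\<in>V. {lab x (c x), lab y (c y)} \<notin> EH') \<and>
      (\<forall>x\<in>V. \<forall>y\<in>V. {lab x (c x), lab y (c y)} \<notin> cross_edges S)"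
    unfolding independent_set_def lift_def cover_with_def by blast
  moreover have "(\<forall>x\<in>V. \<forall>y\<in>V. {lab x (c x), lab y (c y)} \<notin> EH') \<longleftrightarrow>
      (\<forall>x\<in>V. \<forall>y\<in>V. {x, y} \<in> E - {{u, w}} \<longrightarrow> c x \<noteq> c y)"
  proof (intro ball_cong refl)
    fix x y assume "x \<in> V" "y \<in> V"
    then show "{lab x (c x), lab y (c y)} \<notin> EH' \<longleftrightarrow> ({x, y} \<in> E - {{u, w}} \<longrightarrow> c x \<noteq> c y)"
      using lab_pair_in_EH'_iff[of x y "c x" "c y"] c by auto
  qed
  ultimately show ?thesis
    using c lift_avoids_cross_edges_iff[OF S c] unfolding proper_colorings_def by blast
qed

lemma independent_set_inter_L_unique:
  "independent_set EH' I \<Longrightarrow> v \<in> V \<Longrightarrow> a \<in> I \<inter> L v \<Longrightarrow> b \<in> I \<inter> L v \<Longrightarrow> a = b"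
  using L_clique_EH' unfolding independent_set_def by blast

text \<open>Each clique L v contains at most one vertex of I, so |I| = |V| forces exactly one.\<close>
lemma independent_set_meets_L:
  assumes I: "I \<subseteq> VH" "independent_set EH' I" "card I = card V" and v: "v \<in> V"
  shows "I \<inter> L v \<noteq> {}"
proof
  assume empty: "I \<inter> L v = {}"
  have finite: "finite (I \<inter> L x)" for x
    using I(1) finite_VH finite_subset by blast
  have "I = (\<Union>x\<in>V. I \<inter> L x)"
    using I(1) cover_conditions(2) by blast
  also have "card \<dots> = (\<Sum>x\<in>V. card (I \<inter> L x))"
    using finite cover_conditions(3) by (intro card_UN_disjoint[OF finite_V]) auto
  also have "\<dots> < (\<Sum>x\<in>V. 1)"
  proof (rule sum_strict_mono_ex1[OF finite_V])
    show "\<forall>x\<in>V. card (I \<inter> L x) \<le> 1"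
      using independent_set_inter_L_unique[OF I(2)] finite by (simp add: card_le_Suc0_iff_eq)
    show "\<exists>x\<in>V. card (I \<inter> L x) < 1"
      using v empty by (intro bexI[of _ v]) simp_all
  qed
  finally show False
    using I(3) by simp
qed

lemma independent_set_is_lift:
  assumes I: "I \<subseteq> VH" "independent_set EH' I" "card I = card V"
  obtains c where "c \<in> V \<rightarrow>\<^sub>E {..<m}" "I = lift c"
proof -
  define c where "c = (\<lambda>v\<in>V. SOME i. i < m \<and> lab v i \<in> I)"
  have c: "c v < m \<and> lab v (c v) \<in> I" if v: "v \<in> V" for v
  proof -
    obtain a where "a \<in> I" "a \<in> L v"
      using independent_set_meets_L[OF I v] by blast
    then have "\<exists>i. i < m \<and> lab v i \<in> I"
      using L_eq_lab_image[OF v] by auto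
    then show ?thesis
      unfolding c_def using someI_ex[OF \<open>\<exists>i. i < m \<and> lab v i \<in> I\<close>] v by simp
  qed
  have "c \<in> V \<rightarrow>\<^sub>E {..<m}"
    using c unfolding c_def by auto
  moreover have "I = lift c"
  proof
    show "lift c \<subseteq> I"
      unfolding lift_def using c by blast
    show "I \<subseteq> lift c"
    proof
      fix a assume "a \<in> I"
      then obtain v where "v \<in> V" "a \<in> L v"
        using I(1) in_some_L by blast
      then have "a = lab v (c v)"
        using independent_set_inter_L_unique[OF I(2), of v a "lab v (c v)"] \<open>a \<in> I\<close>
          c[OF \<open>v \<in> V\<close>] lab_in_L[OF \<open>v \<in> V\<close>]
        by blast
      then show "a \<in> lift c"
        unfolding lift_def using \<open>v \<in> V\<close> by blast
    qed
  qed
  ultimately show ?thesis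
    using that by blast
qed

lemma P_DP_cover_with:
  assumes S: "S \<subseteq> {..<m} \<times> {..<m}"
  shows "P_DP V VH (cover_with S) = card {c \<in> proper_colorings V (E - {{u, w}}) m. (c u, c w) \<notin> S}"
proof -
  let ?D = "{c \<in> proper_colorings V (E - {{u, w}}) m. (c u, c w) \<notin> S}"
  have D: "?D \<subseteq> V \<rightarrow>\<^sub>E {..<m}"
    unfolding proper_colorings_def by blast
  have "{I. I \<subseteq> VH \<and> independent_set (cover_with S) I \<and> card I = card V} = lift ` ?D"
  proof
    show "lift ` ?D \<subseteq> {I. I \<subseteq> VH \<and> independent_set (cover_with S) I \<and> card I = card V}"
    proof (rule image_subsetI)
      fix c assume "c \<in> ?D"
      then have "c \<in> V \<rightarrow>\<^sub>E {..<m}"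
        using D by blast
      then show "lift c \<in> {I. I \<subseteq> VH \<and> independent_set (cover_with S) I \<and> card I = card V}"
        using lift_subset_VH card_lift independent_lift_iff[OF S] \<open>c \<in> ?D\<close> by auto
    qed
  next
    show "{I. I \<subseteq> VH \<and> independent_set (cover_with S) I \<and> card I = card V} \<subseteq> lift ` ?D"
    proof clarify
      fix I assume I: "I \<subseteq> VH" "independent_set (cover_with S) I" "card I = card V"
      then have "independent_set EH' I"
        unfolding cover_with_def using independent_set_antimono by blast
      then obtain c where c: "c \<in> V \<rightarrow>\<^sub>E {..<m}" and "I = lift c"
        using independent_set_is_lift I by blast
      then show "I \<in> lift ` ?D"
        using independent_lift_iff[OF S c] I(2) by blast
    qed
  qed
  then show ?thesis
    unfolding P_DP_eq_card_independent_sets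
    by (simp add: card_image[OF inj_on_subset[OF inj_on_lift D]])
qed

lemma P_DP_cover_with_eq_sum:
  assumes S: "S \<subseteq> {..<m} \<times> {..<m}"
  shows "real (P_DP V VH (cover_with S)) = real (chrom V (E - {{u, w}}) m) -
    (\<Sum>(i, j)\<in>S. real (card (pinned i j)))"
proof -
  let ?C = "proper_colorings V (E - {{u, w}}) m"
  have "finite S"
    using S finite_subset by blast
  have "card ?C = card ({c \<in> ?C. (c u, c w) \<in> S} \<union> {c \<in> ?C. (c u, c w) \<notin> S})"
    by (rule arg_cong[where f = card]) blast
  also have "\<dots> = card {c \<in> ?C. (c u, c w) \<in> S} + card {c \<in> ?C. (c u, c w) \<notin> S}"
    using finite_proper_colorings[OF finite_V] by (intro card_Un_disjoint) auto
  finally have "real (card ?C) =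
      real (card {c \<in> ?C. (c u, c w) \<in> S}) + real (P_DP V VH (cover_with S))"
    unfolding P_DP_cover_with[OF S] by simp
  moreover have "real (card {c \<in> ?C. (c u, c w) \<in> S}) =
      (\<Sum>(i, j)\<in>S. real (card (pinned i j)))"
    unfolding card_proper_colorings_pinned_in[OF finite_V \<open>finite S\<close>] of_nat_sum
    by (simp add: case_prod_beta)
  ultimately show ?thesis
    unfolding chrom_eq_card_proper_colorings by linarith
qed

section \<open>Re-adding a matching between L u and L w\<close>

lemma doubleton_owners_eq:
  assumes "x \<in> V" "y \<in> V" "x' \<in> V" "y' \<in> V"
    and "a \<in> L x" "b \<in> L y" "a' \<in> L x'" "b' \<in> L y'" "{a, b} = {a', b'}"
  shows "{x, y} = {x', y'}"
proof -
  have "(a = a' \<and> b = b') \<or> (a = b' \<and> b = a')"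
    using assms(9) by (simp add: doubleton_eq_iff)
  then show ?thesis
  proof (elim disjE conjE)
    assume "a = a'" "b = b'"
    then have "x = x'" "y = y'"
      using L_disjoint assms(1-8) by blast+
    then show ?thesis
      by simp
  next
    assume "a = b'" "b = a'"
    then have "x = y'" "y = x'"
      using L_disjoint assms(1-8) by blast+
    then show ?thesis
      by (simp add: insert_commute)
  qed
qed

lemma cross_edges_between: "S \<subseteq> {..<m} \<times> {..<m} \<Longrightarrow> cross_edges S \<subseteq> edges_between (cross_edges S) (L u) (L w)"
  unfolding cross_edges_def edges_between_def using lab_in_L u_in_V w_in_V by blast

lemma edges_between_cover_with_subset:
  "edges_between (cover_with S) A B \<subseteq> edges_between EH A B \<union> cross_edges S"
  unfolding edges_between_def cover_with_def by blast

lemma cross_edge_between_L_uw: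
  assumes S: "S \<subseteq> {..<m} \<times> {..<m}" and "x \<in> V" "y \<in> V"
    and f: "f \<in> cross_edges S" "f \<in> edges_between X (L x) (L y)"
  shows "{x, y} = {u, w}"
proof -
  obtain a b where "a \<in> L x" "b \<in> L y" "f = {a, b}"
    using f(2) unfolding edges_between_def by blast
  moreover obtain a' b' where "a' \<in> L u" "b' \<in> L w" "f = {a', b'}"
    using f(1) cross_edges_between[OF S] unfolding edges_between_def by blast
  ultimately show ?thesis
    using doubleton_owners_eq[OF assms(2,3) u_in_V w_in_V] by metis
qed

lemma is_matching_cross_edges:
  assumes S: "S \<subseteq> {..<m} \<times> {..<m}" and "inj_on fst S" "inj_on snd S"
  shows "is_matching (cross_edges S)"
  unfolding is_matching_def
proof (intro ballI impI)
  fix f g assume "f \<in> cross_edges S" "g \<in> cross_edges S" "f \<noteq> g"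
  then obtain i j k l where ij: "(i, j) \<in> S" "f = {lab u i, lab w j}"
    and kl: "(k, l) \<in> S" "g = {lab u k, lab w l}"
    unfolding cross_edges_def by blast
  then have "(i, j) \<noteq> (k, l)"
    using \<open>f \<noteq> g\<close> by auto
  then have "i \<noteq> k" "j \<noteq> l"
    using inj_onD[OF assms(2) _ ij(1) kl(1)] inj_onD[OF assms(3) _ ij(1) kl(1)] by auto
  moreover have "i < m" "j < m" "k < m" "l < m"
    using ij kl S by auto
  ultimately show "f \<inter> g = {}"
    unfolding ij kl using u_in_V w_in_V u_neq_w by (auto simp: lab_eq_lab_iff)
qed

lemma simple_graph_cover_with:
  assumes S: "S \<subseteq> {..<m} \<times> {..<m}"
  shows "simple_graph VH (cover_with S)"
  unfolding simple_graph_def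
proof (intro conjI finite_VH subsetI CollectI)
  fix f assume "f \<in> cover_with S"
  then consider "f \<in> EH" | i j where "(i, j) \<in> S" "f = {lab u i, lab w j}"
    unfolding cover_with_def cross_edges_def by blast
  then show "\<exists>a b. f = {a, b} \<and> a \<noteq> b \<and> a \<in> VH \<and> b \<in> VH"
  proof cases
    case 1
    then show ?thesis
      using cover_edge_ends by blast
  next
    case (2 i j)
    then have "i < m" "j < m"
      using S by auto
    then have "lab u i \<in> VH" "lab w j \<in> VH" "lab u i \<noteq> lab w j"
      using L_subset lab_in_L u_in_V w_in_V u_neq_w lab_eq_lab_iff by blast+
    then show ?thesis
      using 2 by blast
  qed
qed

lemma edges_between_cover_with_nonempty:
  assumes S: "S \<subseteq> {..<m} \<times> {..<m}" and "x \<in> V" "y \<in> V"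
    and "f \<in> edges_between (cover_with S) (L x) (L y)"
  shows "x = y \<or> {x, y} \<in> E"
proof -
  have "f \<in> edges_between EH (L x) (L y) \<or> f \<in> cross_edges S"
    using assms(4) edges_between_cover_with_subset by blast
  then show ?thesis
    using edges_between_nonempty[OF assms(2,3)] cross_edge_between_L_uw[OF S assms(2,3) _ assms(4)]
      edge_uw by auto
qed

lemma edges_between_cover_with_matching:
  assumes S: "S \<subseteq> {..<m} \<times> {..<m}" and "inj_on fst S" "inj_on snd S"
    and xy: "x \<in> V" "y \<in> V" "{x, y} \<in> E"
  shows "is_matching (edges_between (cover_with S) (L x) (L y))"
proof (cases "{x, y} = {u, w}")
  case True
  then have "edges_between (cover_with S) (L x) (L y) = edges_between (cover_with S) (L u) (L w)"
    using edges_between_commute by (metis doubleton_eq_iff)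
  also have "\<dots> \<subseteq> cross_edges S"
    unfolding cover_with_def edges_between_def by blast
  finally show ?thesis
    using is_matching_cross_edges[OF assms(1-3)] is_matching_subset by blast
next
  case False
  then have "edges_between (cover_with S) (L x) (L y) \<subseteq> edges_between EH (L x) (L y)"
    using edges_between_cover_with_subset cross_edge_between_L_uw[OF S xy(1,2)] by blast
  then show ?thesis
    using edges_between_matching[OF xy] is_matching_subset by blast
qed

lemma cover_with_is_m_fold_cover:
  assumes S: "S \<subseteq> {..<m} \<times> {..<m}" and "inj_on fst S" "inj_on snd S"
  shows "is_m_fold_cover V E L VH (cover_with S) m"
proof -
  have "\<forall>v\<in>V. \<forall>a\<in>L v. \<forall>b\<in>L v. a \<noteq> b \<longrightarrow> {a, b} \<in> cover_with S"
    using L_clique_EH' unfolding cover_with_def by blast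
  moreover have "\<forall>x\<in>V. \<forall>y\<in>V. edges_between (cover_with S) (L x) (L y) \<noteq> {} \<longrightarrow> x = y \<or> {x, y} \<in> E"
    using edges_between_cover_with_nonempty[OF S] by blast
  moreover have "\<forall>x\<in>V. \<forall>y\<in>V. {x, y} \<in> E \<longrightarrow> is_matching (edges_between (cover_with S) (L x) (L y))"
    using edges_between_cover_with_matching[OF assms] by blast
  ultimately show ?thesis
    using simple_graph_cover_with[OF S] cover_conditions(2,3,7)
    unfolding is_m_fold_cover_def is_cover_def by blast
qed

definition cross_pairs :: "(nat \<times> nat) set" where
  "cross_pairs = {(i, j) \<in> {..<m} \<times> {..<m}. {lab u i, lab w j} \<in> EH}"

lemma cover_with_cross_pairs: "cover_with cross_pairs = EH"
proof
  show "cover_with cross_pairs \<subseteq> EH"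
    unfolding cover_with_def cross_edges_def cross_pairs_def by blast
  show "EH \<subseteq> cover_with cross_pairs"
  proof
    fix f assume f: "f \<in> EH"
    show "f \<in> cover_with cross_pairs"
    proof (cases "f \<in> edges_between EH (L u) (L w)")
      case True
      then obtain a b where "a \<in> L u" "b \<in> L w" "f = {a, b}"
        unfolding edges_between_def by blast
      moreover obtain i j where "i < m" "a = lab u i" "j < m" "b = lab w j"
        using \<open>a \<in> L u\<close> \<open>b \<in> L w\<close> L_eq_lab_image[OF u_in_V] L_eq_lab_image[OF w_in_V]
        by (metis imageE lessThan_iff)
      ultimately have "f = {lab u i, lab w j}"
        by simp
      then have "(i, j) \<in> cross_pairs"
        using f \<open>i < m\<close> \<open>j < m\<close> unfolding cross_pairs_def by simp
      then have "f \<in> cross_edges cross_pairs"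
        unfolding cross_edges_def using \<open>f = {lab u i, lab w j}\<close> by blast
      then show ?thesis
        unfolding cover_with_def by blast
    next
      case False
      then show ?thesis
        using f unfolding cover_with_def by blast
    qed
  qed
qed

lemma card_cross_pairs_le: "card cross_pairs \<le> m"
proof -
  have "inj_on fst cross_pairs"
  proof (rule inj_onI)
    fix p q assume "p \<in> cross_pairs" "q \<in> cross_pairs" "fst p = fst q"
    then obtain i j j' where p: "p = (i, j)" and q: "q = (i, j')"
      by (metis prod.collapse)
    then have ij: "(i, j) \<in> cross_pairs" and ij': "(i, j') \<in> cross_pairs"
      using \<open>p \<in> cross_pairs\<close> \<open>q \<in> cross_pairs\<close> by simp_all
    then have "i < m" "j < m" "j' < m"
      unfolding cross_pairs_def by auto
    have "{lab u i, lab w j} \<in> edges_between EH (L u) (L w)" "{lab u i, lab w j'} \<in> edges_between EH (L u) (L w)"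
      using ij ij' lab_pair_in_edges_between u_in_V w_in_V unfolding cross_pairs_def by auto
    then have "{lab u i, lab w j} = {lab u i, lab w j'}"
      using is_matching_eqI edges_between_matching[OF u_in_V w_in_V edge_uw] by blast
    moreover have "lab u i \<noteq> lab w j"
      using \<open>i < m\<close> \<open>j < m\<close> lab_eq_lab_iff u_in_V w_in_V u_neq_w by blast
    ultimately have "lab w j = lab w j'"
      by (metis doubleton_eq_iff)
    then show "p = q"
      using p q lab_eq_iff[OF w_in_V \<open>j < m\<close> \<open>j' < m\<close>] by simp
  qed
  moreover have "fst ` cross_pairs \<subseteq> {..<m}"
    unfolding cross_pairs_def by auto
  ultimately show ?thesis
    using card_inj_on_le[of fst cross_pairs "{..<m}"] by simp
qed

lemma chrom_minus_edge_eq: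
  "chrom V (E - {{u, w}}) m = m * card (pinned 0 0) + m * (m - 1) * card (pinned 0 1)"
proof -
  let ?C = "proper_colorings V (E - {{u, w}}) m"
  have "card ?C = card ({c \<in> ?C. c u = c w} \<union> {c \<in> ?C. c u \<noteq> c w})"
    by (rule arg_cong[where f = card]) blast
  also have "\<dots> = card {c \<in> ?C. c u = c w} + card {c \<in> ?C. c u \<noteq> c w}"
    using finite_proper_colorings[OF finite_V] by (intro card_Un_disjoint) auto
  finally show ?thesis
    unfolding chrom_eq_card_proper_colorings
    using card_proper_colorings_same_color[OF finite_V u_in_V w_in_V]
      card_proper_colorings_distinct_colors[OF finite_V u_in_V w_in_V] by simp
qed

lemma chrom_eq: "chrom V E m = m * (m - 1) * card (pinned 0 1)"
  unfolding chrom_eq_card_proper_colorings proper_colorings_add_edge[OF u_in_V w_in_V edge_uw]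
  by (rule card_proper_colorings_distinct_colors[OF finite_V u_in_V w_in_V])

lemma card_pinned_le_max:
  assumes "i < m" "j < m"
  shows "card (pinned i j) \<le> max (card (pinned 0 0)) (card (pinned 0 1))"
proof (cases "i = j")
  case True
  then show ?thesis
    using card_pinned_colorings_diag[OF finite_V u_in_V w_in_V assms(1), of 0] assms by simp
next
  case False
  then have "1 < m"
    using assms by linarith
  then show ?thesis
    using card_pinned_colorings_off_diag[OF finite_V u_in_V w_in_V assms False, of 0 1] by simp
qed

lemma P_DP_lower_bound:
  "real (chrom V (E - {{u, w}}) m) - real m * max (real (card (pinned 0 0))) (real (card (pinned 0 1)))
    \<le> real (P_DP V VH EH)"
proof -
  let ?M = "max (real (card (pinned 0 0))) (real (card (pinned 0 1)))"
  have S: "cross_pairs \<subseteq> {..<m} \<times> {..<m}"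
    unfolding cross_pairs_def by auto
  have "(\<Sum>(i, j)\<in>cross_pairs. real (card (pinned i j))) \<le> (\<Sum>(i, j)\<in>cross_pairs. ?M)"
  proof (rule sum_mono, clarify)
    fix i j assume "(i, j) \<in> cross_pairs"
    then have "card (pinned i j) \<le> max (card (pinned 0 0)) (card (pinned 0 1))"
      using S card_pinned_le_max by blast
    then show "real (card (pinned i j)) \<le> ?M"
      by linarith
  qed
  also have "\<dots> = real (card cross_pairs) * ?M"
    by simp
  also have "\<dots> \<le> real m * ?M"
    using card_cross_pairs_le by (intro mult_right_mono) auto
  finally show ?thesis
    using P_DP_cover_with_eq_sum[OF S] unfolding cover_with_cross_pairs by linarith
qed

lemma P_DP_cover_with_graph:
  assumes "inj_on \<sigma> {..<m}" "\<sigma> ` {..<m} \<subseteq> {..<m}"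
  defines "S \<equiv> (\<lambda>i. (i, \<sigma> i)) ` {..<m}"
  shows "is_m_fold_cover V E L VH (cover_with S) m"
    and "real (P_DP V VH (cover_with S)) =
      real (chrom V (E - {{u, w}}) m) - real (\<Sum>i<m. card (pinned i (\<sigma> i)))"
proof -
  have S: "S \<subseteq> {..<m} \<times> {..<m}"
    using assms(2) unfolding S_def by auto
  have "inj_on fst S" "inj_on snd S"
    using assms(1) unfolding S_def by (auto simp: inj_on_def)
  then show "is_m_fold_cover V E L VH (cover_with S) m"
    using cover_with_is_m_fold_cover[OF S] by blast
  have "(\<Sum>(i, j)\<in>S. real (card (pinned i j))) = (\<Sum>i<m. real (card (pinned i (\<sigma> i))))"
    unfolding S_def by (subst sum.reindex) (auto simp: inj_on_def)
  then show "real (P_DP V VH (cover_with S)) =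
      real (chrom V (E - {{u, w}}) m) - real (\<Sum>i<m. card (pinned i (\<sigma> i)))"
    using P_DP_cover_with_eq_sum[OF S] by (simp add: of_nat_sum)
qed

lemma P_DP_lower_bound_attained:
  "\<exists>EH'. is_m_fold_cover V E L VH EH' m \<and> real (P_DP V VH EH') =
    real (chrom V (E - {{u, w}}) m) - real m * max (real (card (pinned 0 0))) (real (card (pinned 0 1)))"
proof (cases "card (pinned 0 1) \<le> card (pinned 0 0)")
  case True
  have id: "inj_on id {..<m}" "id ` {..<m} \<subseteq> {..<m}"
    by auto
  have "(\<Sum>i<m. card (pinned i (id i))) = m * card (pinned 0 0)"
    using sum_card_pinned_colorings_diag[OF finite_V u_in_V w_in_V] by simp
  moreover have "max (real (card (pinned 0 0))) (real (card (pinned 0 1))) = real (card (pinned 0 0))"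
    using True by simp
  ultimately show ?thesis
    using P_DP_cover_with_graph[OF id] by auto
next
  case False
  then obtain c where "c \<in> pinned 0 1"
    by fastforce
  then have "c w = 1" "c \<in> V \<rightarrow>\<^sub>E {..<m}"
    unfolding pinned_colorings_def proper_colorings_def by auto
  then have "1 < m"
    using PiE_mem[of c V "\<lambda>_. {..<m}" w] w_in_V by simp
  define \<sigma> where "\<sigma> i = Suc i mod m" for i
  have \<sigma>: "inj_on \<sigma> {..<m}" "\<sigma> ` {..<m} \<subseteq> {..<m}"
    unfolding \<sigma>_def inj_on_def using \<open>1 < m\<close> by (auto simp: mod_Suc split: if_splits)
  have "\<sigma> i < m \<and> \<sigma> i \<noteq> i" if "i < m" for i
    unfolding \<sigma>_def using that \<open>1 < m\<close> by (auto simp: mod_Suc)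
  then have "(\<Sum>i<m. card (pinned i (\<sigma> i))) = m * card (pinned 0 1)"
    using sum_card_pinned_colorings_derangement[OF finite_V u_in_V w_in_V] by blast
  moreover have "max (real (card (pinned 0 0))) (real (card (pinned 0 1))) = real (card (pinned 0 1))"
    using False by simp
  ultimately show ?thesis
    using P_DP_cover_with_graph[OF \<sigma>] by auto
qed

end

theorem mainTheorem13:
  fixes V :: "'v set" and E :: "'v set set" and m :: nat
    and L :: "'v \<Rightarrow> 'c set" and VH :: "'c set" and EH :: "'c set set" and u w :: 'v
  assumes "simple_graph V E"
    and "m \<ge> 2"
    and "is_m_fold_cover V E L VH EH m"
    and "{u, w} \<in> E"
    and "natural_bijection V (E - {{u, w}}) L (EH - edges_between EH (L u) (L w)) m"
  shows "real (P_DP V VH EH) \<ge>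
           real (chrom V (E - {{u, w}}) m)
           - max (real (chrom V (E - {{u, w}}) m) - real (chrom V E m))
                 (real (chrom V E m) / (real m - 1))
       \<and> (\<exists>EH' :: 'c set set. is_m_fold_cover V E L VH EH' m \<and>
           real (P_DP V VH EH') =
           real (chrom V (E - {{u, w}}) m)
           - max (real (chrom V (E - {{u, w}}) m) - real (chrom V E m))
                 (real (chrom V E m) / (real m - 1)))"
proof -
  obtain lab :: "'v \<Rightarrow> nat \<Rightarrow> 'c" where
    "\<forall>v\<in>V. bij_betw (lab v) {..<m} (L v)"
    "\<forall>x\<in>V. \<forall>y\<in>V. {x, y} \<in> E - {{u, w}} \<longrightarrow>
      (\<forall>j<m. {lab x j, lab y j} \<in> EH - edges_between EH (L u) (L w))"
    using assms(5) unfolding natural_bijection_def by blast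
  then interpret naturally_labelled_cover V E m L VH EH u w lab
    using assms(1,3,4) by unfold_locales auto
  define A B where "A = real (card (pinned 0 0))" and "B = real (card (pinned 0 1))"
  have "real (chrom V (E - {{u, w}}) m) - real (chrom V E m) = real m * A"
    unfolding A_def chrom_minus_edge_eq chrom_eq by simp
  moreover have "real (chrom V E m) / (real m - 1) = real m * B"
    using assms(2) unfolding B_def chrom_eq by (simp add: of_nat_diff)
  ultimately have "max (real (chrom V (E - {{u, w}}) m) - real (chrom V E m))
      (real (chrom V E m) / (real m - 1)) = real m * max A B"
    by (simp add: max_mult_distrib_left)
  then show ?thesis
    using P_DP_lower_bound P_DP_lower_bound_attained unfolding A_def B_def by simp
qed

end
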